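(* For any $X\in T^1(\Sigma)$ the following are equivalent: (i) $X$ is an idempotent tree (its start vertex equals its end vertex); (ii) $X$ is idempotent under pruned multiplication, i.e. $XX=X$; (iii) $X=X^+$; (iv) $X=Y^+$ for some $Y\in T^1(\Sigma)$; (v) $X=X^*$; (vi) $X=Y^*$ for some $Y\in T^1(\Sigma)$.
   Context: Let $\Sigma$ be a set. A $\Sigma$-tree is a finite directed graph whose underlying undirected graph is a tree, edges labelled by elements of $\Sigma$, with distinguished start and end vertices such that there is a (possibly empty) directed path from start to end vertex. A morphism $X\to Y$ maps vertices to vertices and edges to edges, preserving initial vertex, terminal vertex and label of each edge, and mapping start/end vertex to start/end vertex; isomorphisms are morphisms bijective on vertices and edges. A retraction is an idempotent morphism $X\to X$, its image a retract; $X$ is pruned if it admits no non-identity retraction. Every tree $X$ has a pruned retract, unique up to isomorphism, whose isomorphism type is $\overline{X}$. $T^1(\Sigma)$ is the set of isomorphism types of pruned $\Sigma$-trees. Unpruned operations: $X\times Y$ identifies the end vertex of (a copy of) $X$ with the start vertex of (a disjoint copy of) $Y$, start vertex that of $X$, end vertex that of $Y$; $X^{(+)}$ is $X$ with end vertex moved to the start vertex; $X^{( * )}$ is $X$ with start vertex moved to the end vertex. Pruned operations: $XY=\overline{X\times Y}$, $X^+=\overline{X^{(+)}}$, $X^*=\overline{X^{( * )}}$. *)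

theory Defs
  imports Main
begin

record ('v, 'e, 's) stree =
  verts :: "'v set"
  edges :: "'e set"
  src :: "'e \<Rightarrow> 'v"
  tgt :: "'e \<Rightarrow> 'v"
  lab :: "'e \<Rightarrow> 's"
  st :: 'v
  en :: 'v

definition undir_adj :: "('v, 'e, 's) stree \<Rightarrow> ('v \<times> 'v) set" where
  "undir_adj X = {(src X e, tgt X e) | e. e \<in> edges X} \<union> {(tgt X e, src X e) | e. e \<in> edges X}"

definition dir_adj :: "('v, 'e, 's) stree \<Rightarrow> ('v \<times> 'v) set" where
  "dir_adj X = {(src X e, tgt X e) | e. e \<in> edges X}"

text \<open>Underlying undirected graph is a (finite) tree: nonempty, connected, |E| = |V| - 1
  (this excludes cycles, loops and multiple edges).\<close>
definition is_tree :: "('v, 'e, 's) stree \<Rightarrow> bool" where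
  "is_tree X \<longleftrightarrow> finite (verts X) \<and> finite (edges X) \<and> verts X \<noteq> {}
     \<and> (\<forall>e\<in>edges X. src X e \<in> verts X \<and> tgt X e \<in> verts X)
     \<and> (\<forall>u\<in>verts X. \<forall>v\<in>verts X. (u, v) \<in> (undir_adj X)\<^sup>*)
     \<and> card (edges X) + 1 = card (verts X)
     \<and> st X \<in> verts X \<and> en X \<in> verts X
     \<and> (st X, en X) \<in> (dir_adj X)\<^sup>*"

definition morphism :: "('v, 'e, 's) stree \<Rightarrow> ('w, 'f, 's) stree \<Rightarrow> ('v \<Rightarrow> 'w) \<Rightarrow> ('e \<Rightarrow> 'f) \<Rightarrow> bool" where
  "morphism X Y f g \<longleftrightarrow> f ` verts X \<subseteq> verts Y \<and> g ` edges X \<subseteq> edges Y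
     \<and> (\<forall>e\<in>edges X. src Y (g e) = f (src X e) \<and> tgt Y (g e) = f (tgt X e) \<and> lab Y (g e) = lab X e)
     \<and> f (st X) = st Y \<and> f (en X) = en Y"

definition isomorphic :: "('v, 'e, 's) stree \<Rightarrow> ('w, 'f, 's) stree \<Rightarrow> bool" where
  "isomorphic X Y \<longleftrightarrow> (\<exists>f g. morphism X Y f g \<and> bij_betw f (verts X) (verts Y) \<and> bij_betw g (edges X) (edges Y))"

definition retraction :: "('v, 'e, 's) stree \<Rightarrow> ('v \<Rightarrow> 'v) \<Rightarrow> ('e \<Rightarrow> 'e) \<Rightarrow> bool" where
  "retraction X f g \<longleftrightarrow> morphism X X f g
     \<and> (\<forall>v\<in>verts X. f (f v) = f v) \<and> (\<forall>e\<in>edges X. g (g e) = g e)"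

definition retract :: "('v, 'e, 's) stree \<Rightarrow> ('v \<Rightarrow> 'v) \<Rightarrow> ('e \<Rightarrow> 'e) \<Rightarrow> ('v, 'e, 's) stree" where
  "retract X f g = X\<lparr>verts := f ` verts X, edges := g ` edges X\<rparr>"

definition pruned :: "('v, 'e, 's) stree \<Rightarrow> bool" where
  "pruned X \<longleftrightarrow> (\<forall>f g. retraction X f g \<longrightarrow>
      (\<forall>v\<in>verts X. f v = v) \<and> (\<forall>e\<in>edges X. g e = e))"

text \<open>Element of T^1(Sigma): a pruned Sigma-tree (taken up to isomorphism).\<close>
definition T1 :: "('v, 'e, 's) stree \<Rightarrow> bool" where
  "T1 X \<longleftrightarrow> is_tree X \<and> pruned X"

text \<open>\<open>prune_is W Z\<close>: Z represents the isomorphism type of the pruned retract of W,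
  i.e. (overline W) = [Z].\<close>
definition prune_is :: "('v, 'e, 's) stree \<Rightarrow> ('w, 'f, 's) stree \<Rightarrow> bool" where
  "prune_is W Z \<longleftrightarrow> (\<exists>f g. retraction W f g \<and> pruned (retract W f g) \<and> isomorphic (retract W f g) Z)"

definition tmult :: "('v, 'e, 's) stree \<Rightarrow> ('v, 'e, 's) stree \<Rightarrow> ('v + 'v, 'e + 'e, 's) stree" where
  "tmult X Y = (let j = (\<lambda>v. if v = st Y then Inl (en X) else Inr v) in
     \<lparr> verts = Inl ` verts X \<union> Inr ` (verts Y - {st Y}),
       edges = Inl ` edges X \<union> Inr ` edges Y,
       src = case_sum (\<lambda>e. Inl (src X e)) (\<lambda>e. j (src Y e)),
       tgt = case_sum (\<lambda>e. Inl (tgt X e)) (\<lambda>e. j (tgt Y e)),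
       lab = case_sum (lab X) (lab Y),
       st = Inl (st X),
       en = j (en Y) \<rparr>)"

definition tplus :: "('v, 'e, 's) stree \<Rightarrow> ('v, 'e, 's) stree" where
  "tplus X = X\<lparr>en := st X\<rparr>"

definition tstar :: "('v, 'e, 's) stree \<Rightarrow> ('v, 'e, 's) stree" where
  "tstar X = X\<lparr>st := en X\<rparr>"

end

theory Submission
  imports Defs
begin

text \<open>Moving the end vertex to the start (or the start to the end) does nothing to a tree
  whose start and end coincide, and a morphism onto the pruned retract keeps them equal, which
  settles the conditions on \<open>X\<^sup>+\<close> and \<open>X\<^sup>*\<close>. If start and end coincide, \<open>X \<times> X\<close> folds onto its
  first factor, so \<open>XX = X\<close>. Conversely, if \<open>XX = X\<close>, the morphism \<open>X \<times> X \<rightarrow> X\<close> carries the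
  start-to-end path of \<open>X \<times> X\<close>, which is twice as long as the path of length \<open>d\<close> in \<open>X\<close>, to
  a start-to-end walk in \<open>X\<close>. A tree has a height function rising by one along every edge, so
  all walks between two vertices have the same length: \<open>2 d = d\<close>, hence \<open>d = 0\<close>.\<close>

definition undirected_tree :: "('v, 'e, 's) stree \<Rightarrow> bool" where
  "undirected_tree X \<longleftrightarrow> finite (verts X) \<and> finite (edges X) \<and> verts X \<noteq> {}
     \<and> (\<forall>e\<in>edges X. src X e \<in> verts X \<and> tgt X e \<in> verts X)
     \<and> (\<forall>u\<in>verts X. \<forall>v\<in>verts X. (u, v) \<in> (undir_adj X)\<^sup>*)
     \<and> card (edges X) + 1 = card (verts X)"

lemma is_tree_imp_undirected_tree: "is_tree X \<Longrightarrow> undirected_tree X"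
  unfolding is_tree_def undirected_tree_def by blast

lemma sum_card_fibres:
  assumes "finite V" "finite E" "\<forall>e\<in>E. s e \<in> V"
  shows "(\<Sum>v\<in>V. card {e\<in>E. s e = v}) = card E"
proof -
  have "\<forall>e\<in>E. {v\<in>V. s e = v} = {s e}" using assms(3) by auto
  then have "\<forall>e\<in>E. card {v\<in>V. s e = v} = 1" by simp
  then show ?thesis using sum_multicount[of V E "\<lambda>v e. s e = v" 1] assms by simp
qed

text \<open>Degree counting: the degrees sum to \<open>2 card E = 2 card V - 2\<close>, so some vertex has
  degree below 2, and connectedness excludes degree 0.\<close>
lemma undirected_tree_has_leaf:
  assumes T: "undirected_tree X" and two: "card (verts X) \<ge> 2"
  obtains v e where "v \<in> verts X" "{e\<in>edges X. src X e = v \<or> tgt X e = v} = {e}"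
    "src X e \<noteq> tgt X e"
proof -
  let ?V = "verts X" and ?E = "edges X"
  let ?out = "\<lambda>v. {e\<in>?E. src X e = v}" and ?in = "\<lambda>v. {e\<in>?E. tgt X e = v}"
  have fin: "finite ?V" "finite ?E" and ends: "\<forall>e\<in>?E. src X e \<in> ?V \<and> tgt X e \<in> ?V"
    and conn: "\<forall>u\<in>?V. \<forall>w\<in>?V. (u, w) \<in> (undir_adj X)\<^sup>*" and card: "card ?E + 1 = card ?V"
    using T unfolding undirected_tree_def by auto
  have "(\<Sum>v\<in>?V. card (?out v) + card (?in v)) = 2 * card ?E"
    using sum_card_fibres[of ?V ?E "src X"] sum_card_fibres[of ?V ?E "tgt X"] fin ends
    by (simp add: sum.distrib)
  also have "\<dots> < (\<Sum>v\<in>?V. 2)" using card two by simp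
  finally obtain v where v: "v \<in> ?V" "card (?out v) + card (?in v) < 2"
    by (meson not_less sum_mono)
  have "\<not> card ?V \<le> Suc 0" using two by simp
  then obtain w where "w \<in> ?V" "w \<noteq> v" using v(1) fin(1) card_le_Suc0_iff_eq by blast
  then have "(v, w) \<in> (undir_adj X)\<^sup>+" using conn v(1) by (auto simp: rtrancl_eq_or_trancl)
  then obtain y where "(v, y) \<in> undir_adj X" by (meson tranclD)
  then have "?out v \<noteq> {} \<or> ?in v \<noteq> {}" unfolding undir_adj_def by auto
  then have "card (?out v) + card (?in v) \<noteq> 0" using fin by simp
  then have "card (?out v) + card (?in v) = 1" using v(2) by linarith
  then have "(card (?out v) = 1 \<and> ?in v = {}) \<or> (?out v = {} \<and> card (?in v) = 1)"
    using fin by (simp add: add_is_1 card_eq_0_iff)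
  then obtain e where "(?out v = {e} \<and> ?in v = {}) \<or> (?out v = {} \<and> ?in v = {e})"
    by (auto simp: card_1_singleton_iff)
  then have "{e\<in>?E. src X e = v \<or> tgt X e = v} = {e}" "src X e \<noteq> tgt X e"
    by (auto simp: set_eq_iff) metis+
  with v(1) show ?thesis using that by blast
qed

lemma undirected_tree_remove_leaf:
  assumes T: "undirected_tree X" and v: "v \<in> verts X"
    and leaf: "{e\<in>edges X. src X e = v \<or> tgt X e = v} = {e0}" and nl: "src X e0 \<noteq> tgt X e0"
  shows "undirected_tree (X\<lparr>verts := verts X - {v}, edges := edges X - {e0}\<rparr>)"
    (is "undirected_tree ?X'")
proof -
  have fin: "finite (verts X)" "finite (edges X)" and ends: "\<forall>e\<in>edges X. src X e \<in> verts X \<and> tgt X e \<in> verts X"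
    and conn: "\<forall>u\<in>verts X. \<forall>w\<in>verts X. (u, w) \<in> (undir_adj X)\<^sup>*" and card: "card (edges X) + 1 = card (verts X)"
    using T unfolding undirected_tree_def by auto
  have e0: "e0 \<in> edges X" using leaf by auto
  define x where "x = (if src X e0 = v then tgt X e0 else src X e0)"
  have x: "x \<noteq> v" "x \<in> verts X" "(src X e0 = v \<and> tgt X e0 = x) \<or> (src X e0 = x \<and> tgt X e0 = v)"
    using leaf nl ends e0 unfolding x_def by auto
  have other_ends: "src X e \<noteq> v \<and> tgt X e \<noteq> v" if "e \<in> edges X" "e \<noteq> e0" for e
    using leaf that by auto
  text \<open>A walk from \<open>u \<noteq> v\<close> can only reach the leaf \<open>v\<close> through \<open>x\<close>.\<close>
  have avoid: "(w \<noteq> v \<and> (u, w) \<in> (undir_adj ?X')\<^sup>*) \<or> (w = v \<and> (u, x) \<in> (undir_adj ?X')\<^sup>*)"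
    if "(u, w) \<in> (undir_adj X)\<^sup>*" "u \<noteq> v" for u w
    using that(1)
  proof (induction rule: rtrancl_induct)
    case base
    then show ?case using that(2) by simp
  next
    case (step w w')
    then obtain e where e: "e \<in> edges X" "(w, w') = (src X e, tgt X e) \<or> (w, w') = (tgt X e, src X e)"
      unfolding undir_adj_def by auto
    show ?case
    proof (cases "e = e0")
      case True
      then have "(w = v \<and> w' = x) \<or> (w = x \<and> w' = v)" using e x by auto
      then show ?thesis using step.IH x(1) by auto
    next
      case False
      then have "(w, w') \<in> undir_adj ?X'" "w \<noteq> v" "w' \<noteq> v"
        using e other_ends[OF e(1)] unfolding undir_adj_def by auto
      then show ?thesis using step.IH by auto
    qed
  qed
  show ?thesis
    unfolding undirected_tree_def
  proof (intro conjI ballI)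
    show "finite (verts ?X')" "finite (edges ?X')" "verts ?X' \<noteq> {}" using fin x by auto
    have "card (edges X) \<noteq> 0" using e0 fin by auto
    then show "card (edges ?X') + 1 = card (verts ?X')"
      using card e0 v by (simp add: card_Diff_singleton)
  next
    fix e assume "e \<in> edges ?X'"
    then show "src ?X' e \<in> verts ?X'" "tgt ?X' e \<in> verts ?X'" using other_ends ends by auto
  next
    fix u w assume "u \<in> verts ?X'" "w \<in> verts ?X'"
    then show "(u, w) \<in> (undir_adj ?X')\<^sup>*" using avoid conn by auto
  qed
qed

text \<open>Remove a leaf with its edge, then fix the leaf's height by that edge.\<close>
lemma undirected_tree_height:
  assumes "undirected_tree X"
  shows "\<exists>h :: 'v \<Rightarrow> int. \<forall>e\<in>edges X. h (tgt X e) = h (src X e) + 1"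
  using assms
proof (induction "card (verts X)" arbitrary: X rule: less_induct)
  case less
  show ?case
  proof (cases "card (verts X) \<ge> 2")
    case False
    have "card (edges X) + 1 = card (verts X)" "finite (edges X)"
      using less.prems unfolding undirected_tree_def by auto
    then have "card (edges X) = 0" using False by linarith
    then have "edges X = {}" using \<open>finite (edges X)\<close> by simp
    then show ?thesis by simp
  next
    case True
    then obtain v e0 where v: "v \<in> verts X" and leaf: "{e\<in>edges X. src X e = v \<or> tgt X e = v} = {e0}"
      and nl: "src X e0 \<noteq> tgt X e0"
      using undirected_tree_has_leaf[OF less.prems] by blast
    let ?X' = "X\<lparr>verts := verts X - {v}, edges := edges X - {e0}\<rparr>"
    have "card (verts ?X') < card (verts X)"
      using v less.prems by (simp add: card_Diff1_less undirected_tree_def)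
    then obtain h :: "'v \<Rightarrow> int" where "\<forall>e\<in>edges ?X'. h (tgt ?X' e) = h (src ?X' e) + 1"
      using less.hyps undirected_tree_remove_leaf[OF less.prems v leaf nl] by blast
    then have h: "\<forall>e\<in>edges X - {e0}. h (tgt X e) = h (src X e) + 1" by simp
    define h' where "h' = h(v := if src X e0 = v then h (tgt X e0) - 1 else h (src X e0) + 1)"
    have "h' (tgt X e) = h' (src X e) + 1" if "e \<in> edges X" for e
    proof (cases "e = e0")
      case True
      then show ?thesis using nl leaf unfolding h'_def by auto
    next
      case False
      then have "src X e \<noteq> v" "tgt X e \<noteq> v" using leaf that by auto
      then show ?thesis using h that False unfolding h'_def by simp
    qed
    then show ?thesis by blast
  qed
qed

inductive walk :: "('v, 'e, 's) stree \<Rightarrow> 'v \<Rightarrow> nat \<Rightarrow> 'v \<Rightarrow> bool" for X where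
  walk_Nil: "walk X u 0 u"
| walk_Cons: "e \<in> edges X \<Longrightarrow> walk X (tgt X e) n w \<Longrightarrow> walk X (src X e) (Suc n) w"

lemma walk_if_dir_adj_rtrancl: "(u, v) \<in> (dir_adj X)\<^sup>* \<Longrightarrow> \<exists>n. walk X u n v"
proof (induction rule: converse_rtrancl_induct)
  case base
  then show ?case by (blast intro: walk_Nil)
next
  case (step y z)
  then obtain e where "e \<in> edges X" "y = src X e" "z = tgt X e" unfolding dir_adj_def by auto
  then show ?case using step.IH walk_Cons by metis
qed

lemma walk_append: "walk X u n v \<Longrightarrow> walk X v m w \<Longrightarrow> walk X u (n + m) w"
  by (induction rule: walk.induct) (auto intro: walk.intros)

lemma walk_0_iff: "walk X u 0 v \<longleftrightarrow> u = v"
  by (auto elim: walk.cases intro: walk_Nil)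

lemma walk_height:
  assumes "walk X u n v" and "\<forall>e\<in>edges X. h (tgt X e) = h (src X e) + (1::int)"
  shows "h v = h u + int n"
  using assms by (induction rule: walk.induct) auto

lemma undirected_tree_walk_length_unique:
  fixes X :: "('v, 'e, 's) stree"
  assumes "undirected_tree X" "walk X u n v" "walk X u m v"
  shows "n = m"
proof -
  obtain h :: "'v \<Rightarrow> int" where "\<forall>e\<in>edges X. h (tgt X e) = h (src X e) + 1"
    using undirected_tree_height[OF assms(1)] by blast
  then have "h v = h u + int n" "h v = h u + int m"
    using walk_height[OF assms(2)] walk_height[OF assms(3)] by blast+
  then show ?thesis by simp
qed

lemma walk_morphism:
  assumes "morphism X Y f g" "walk X u n v"
  shows "walk Y (f u) n (f v)"
  using assms(2)
proof (induction rule: walk.induct)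
  case (walk_Nil u)
  then show ?case by (rule walk.walk_Nil)
next
  case (walk_Cons e n w)
  then have "g e \<in> edges Y" "src Y (g e) = f (src X e)" "tgt Y (g e) = f (tgt X e)"
    using assms(1) unfolding morphism_def by auto
  then show ?case using walk.walk_Cons[of "g e" Y n "f w"] walk_Cons.IH by simp
qed

lemma walk_tmult_left: "walk X u n v \<Longrightarrow> walk (tmult X Y) (Inl u) n (Inl v)"
proof (induction rule: walk.induct)
  case (walk_Nil u)
  then show ?case by (rule walk.walk_Nil)
next
  case (walk_Cons e n w)
  have "Inl e \<in> edges (tmult X Y)" "src (tmult X Y) (Inl e) = Inl (src X e)"
    "tgt (tmult X Y) (Inl e) = Inl (tgt X e)"
    using walk_Cons.hyps unfolding tmult_def Let_def by auto
  then show ?case using walk.walk_Cons walk_Cons.IH by metis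
qed

lemma walk_tmult_right:
  fixes X Y :: "('v, 'e, 's) stree"
  defines "j \<equiv> \<lambda>v. if v = st Y then Inl (en X) else Inr v"
  shows "walk Y u n v \<Longrightarrow> walk (tmult X Y) (j u) n (j v)"
proof (induction rule: walk.induct)
  case (walk_Nil u)
  then show ?case by (rule walk.walk_Nil)
next
  case (walk_Cons e n w)
  have "Inr e \<in> edges (tmult X Y)" "src (tmult X Y) (Inr e) = j (src Y e)"
    "tgt (tmult X Y) (Inr e) = j (tgt Y e)"
    using walk_Cons.hyps unfolding tmult_def Let_def j_def by auto
  then show ?case using walk.walk_Cons walk_Cons.IH by metis
qed

lemma walk_tmult:
  assumes "walk X (st X) n (en X)" "walk Y (st Y) m (en Y)"
  shows "walk (tmult X Y) (st (tmult X Y)) (n + m) (en (tmult X Y))"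
proof -
  have "walk (tmult X Y) (Inl (st X)) n (Inl (en X))" by (rule walk_tmult_left[OF assms(1)])
  moreover have "walk (tmult X Y) (Inl (en X)) m (if en Y = st Y then Inl (en X) else Inr (en Y))"
    using walk_tmult_right[OF assms(2), of X] by simp
  ultimately show ?thesis unfolding tmult_def Let_def by (simp add: walk_append)
qed

lemma morphism_comp:
  "morphism X Y f g \<Longrightarrow> morphism Y Z f' g' \<Longrightarrow> morphism X Z (f' \<circ> f) (g' \<circ> g)"
  unfolding morphism_def by (auto simp: image_subset_iff)

lemma morphism_retract: "retraction X f g \<Longrightarrow> morphism X (retract X f g) f g"
  unfolding retraction_def morphism_def retract_def by auto

lemma prune_is_morphism:
  assumes "prune_is W Z"
  obtains p q where "morphism W Z p q"
proof -
  obtain f g where r: "retraction W f g" and "isomorphic (retract W f g) Z"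
    using assms unfolding prune_is_def by auto
  then obtain p q where "morphism (retract W f g) Z p q" unfolding isomorphic_def by auto
  then show ?thesis using that morphism_comp[OF morphism_retract[OF r]] by blast
qed

lemma prune_is_st_eq_en:
  assumes "prune_is W Z" "st W = en W"
  shows "st Z = en Z"
  using prune_is_morphism[OF assms(1)] assms(2) unfolding morphism_def by metis

lemma prune_is_self:
  assumes "pruned X"
  shows "prune_is X X"
proof -
  have "retraction X id id" unfolding retraction_def morphism_def by auto
  moreover have "retract X id id = X" unfolding retract_def by simp
  moreover have "isomorphic X X" unfolding isomorphic_def morphism_def
    by (rule exI[of _ id], rule exI[of _ id]) auto
  ultimately show ?thesis using assms unfolding prune_is_def by metis
qed

text \<open>If \<open>R\<close> is a retract of \<open>X\<close> in the categorical sense (\<open>p \<circ> p' = id\<close> on \<open>R\<close>), every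
  retraction \<open>a\<close> of \<open>R\<close> induces the retraction \<open>p' \<circ> a \<circ> p\<close> of \<open>X\<close>.\<close>
lemma pruned_if_retract_of_pruned:
  assumes pr: "pruned X" and m1: "morphism X R p q" and m2: "morphism R X p' q'"
    and i1: "\<forall>v\<in>verts R. p (p' v) = v" and i2: "\<forall>e\<in>edges R. q (q' e) = e"
  shows "pruned R"
  unfolding pruned_def
proof (intro allI impI)
  fix a b assume r: "retraction R a b"
  have ma: "morphism R R a b" using r unfolding retraction_def by simp
  have "retraction X (p' \<circ> a \<circ> p) (q' \<circ> b \<circ> q)"
    unfolding retraction_def
  proof (intro conjI ballI)
    show "morphism X X (p' \<circ> a \<circ> p) (q' \<circ> b \<circ> q)"
      using morphism_comp[OF morphism_comp[OF m1 ma] m2] by (simp add: comp_assoc)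
  next
    fix v assume "v \<in> verts X"
    then show "(p' \<circ> a \<circ> p) ((p' \<circ> a \<circ> p) v) = (p' \<circ> a \<circ> p) v"
      using i1 m1 ma r unfolding retraction_def morphism_def by (auto simp: image_subset_iff)
  next
    fix e assume "e \<in> edges X"
    then show "(q' \<circ> b \<circ> q) ((q' \<circ> b \<circ> q) e) = (q' \<circ> b \<circ> q) e"
      using i2 m1 ma r unfolding retraction_def morphism_def by (auto simp: image_subset_iff)
  qed
  then have "(\<forall>v\<in>verts X. (p' \<circ> a \<circ> p) v = v) \<and> (\<forall>e\<in>edges X. (q' \<circ> b \<circ> q) e = e)"
    using pr unfolding pruned_def by blast
  then have fx: "\<forall>v\<in>verts X. p' (a (p v)) = v" "\<forall>e\<in>edges X. q' (b (q e)) = e" by auto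
  show "(\<forall>v\<in>verts R. a v = v) \<and> (\<forall>e\<in>edges R. b e = e)"
  proof (intro conjI ballI)
    fix w assume "w \<in> verts R"
    then obtain v where v: "v \<in> verts X" "w = p v" "a w \<in> verts R"
      using i1 ma m2 unfolding morphism_def by (metis image_subset_iff)
    then have "a w = p (p' (a (p v)))" using i1 by simp
    also have "\<dots> = w" using fx(1) v by simp
    finally show "a w = w" .
  next
    fix w assume "w \<in> edges R"
    then obtain e where e: "e \<in> edges X" "w = q e" "b w \<in> edges R"
      using i2 ma m2 unfolding morphism_def by (metis image_subset_iff)
    then have "b w = q (q' (b (q e)))" using i2 by simp
    also have "\<dots> = w" using fx(2) e by simp
    finally show "b w = w" .
  qed
qed

text \<open>For \<open>st X = en X\<close>, folding the second factor onto the first is a retraction of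
  \<open>X \<times> X\<close> whose image is a copy of \<open>X\<close>.\<close>
lemma prune_is_tmult_self:
  fixes X :: "('v, 'e, 's) stree"
  assumes "T1 X" and se: "st X = en X"
  shows "prune_is (tmult X X) X"
proof -
  define W where "W = tmult X X"
  define f :: "'v + 'v \<Rightarrow> 'v + 'v" where "f = case_sum Inl Inl"
  define g :: "'e + 'e \<Rightarrow> 'e + 'e" where "g = case_sum Inl Inl"
  define R where "R = retract W f g"
  have pr: "pruned X" and tr: "is_tree X" using assms unfolding T1_def by auto
  then have ends: "\<forall>e\<in>edges X. src X e \<in> verts X \<and> tgt X e \<in> verts X" and "st X \<in> verts X"
    unfolding is_tree_def by auto
  have W: "verts W = Inl ` verts X \<union> Inr ` (verts X - {st X})" "edges W = Inl ` edges X \<union> Inr ` edges X"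
    "\<And>e. src W (Inl e) = Inl (src X e)" "\<And>e. tgt W (Inl e) = Inl (tgt X e)"
    "\<And>e. src W (Inr e) = (if src X e = st X then Inl (st X) else Inr (src X e))"
    "\<And>e. tgt W (Inr e) = (if tgt X e = st X then Inl (st X) else Inr (tgt X e))"
    "\<And>e. lab W (Inl e) = lab X e" "\<And>e. lab W (Inr e) = lab X e"
    "st W = Inl (st X)" "en W = Inl (st X)"
    unfolding W_def tmult_def Let_def using se by auto
  have ret: "retraction W f g"
    unfolding retraction_def morphism_def f_def g_def
    using W ends by (auto simp: image_subset_iff split: sum.splits if_splits)
  have R: "verts R = Inl ` verts X" "edges R = Inl ` edges X" "src R = src W" "tgt R = tgt W"
    "lab R = lab W" "st R = st W" "en R = en W"
    unfolding R_def retract_def using W \<open>st X \<in> verts X\<close> by (auto simp: f_def g_def image_Un image_image)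
  have m1: "morphism X R Inl Inl" and m2: "morphism R X projl projl"
    unfolding morphism_def using R W se by auto
  have "pruned R"
    by (rule pruned_if_retract_of_pruned[OF pr m1 m2]) (auto simp: R)
  moreover have "isomorphic R X"
    unfolding isomorphic_def
  proof (intro exI conjI)
    show "morphism R X projl projl" by (rule m2)
    show "bij_betw projl (verts R) (verts X)" "bij_betw projl (edges R) (edges X)"
      unfolding R bij_betw_def inj_on_def by (auto simp: image_image)
  qed
  ultimately show ?thesis using ret unfolding prune_is_def R_def W_def by blast
qed

lemma st_eq_en_if_prune_is_tmult_self:
  assumes tr: "is_tree X" and p: "prune_is (tmult X X) X"
  shows "st X = en X"
proof -
  have "(st X, en X) \<in> (dir_adj X)\<^sup>*" using tr unfolding is_tree_def by blast
  then obtain d where d: "walk X (st X) d (en X)" by (blast dest: walk_if_dir_adj_rtrancl)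
  obtain f g where m: "morphism (tmult X X) X f g" using prune_is_morphism[OF p] .
  have "walk X (f (st (tmult X X))) (d + d) (f (en (tmult X X)))"
    by (rule walk_morphism[OF m walk_tmult[OF d d]])
  then have "walk X (st X) (d + d) (en X)" using m unfolding morphism_def by simp
  then have "d + d = d"
    using undirected_tree_walk_length_unique[OF is_tree_imp_undirected_tree[OF tr] _ d] by blast
  then show ?thesis using d by (simp add: walk_0_iff)
qed

theorem proposition4p8:
  fixes X :: "(nat, nat, 's) stree"
  assumes "T1 X"
  shows "(st X = en X \<longleftrightarrow> prune_is (tmult X X) X)
       \<and> (st X = en X \<longleftrightarrow> prune_is (tplus X) X)
       \<and> (st X = en X \<longleftrightarrow> (\<exists>Y :: (nat, nat, 's) stree. T1 Y \<and> prune_is (tplus Y) X))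
       \<and> (st X = en X \<longleftrightarrow> prune_is (tstar X) X)
       \<and> (st X = en X \<longleftrightarrow> (\<exists>Y :: (nat, nat, 's) stree. T1 Y \<and> prune_is (tstar Y) X))"
proof -
  have "is_tree X" "pruned X" using assms unfolding T1_def by auto
  have plus: "prune_is (tplus Y) X \<Longrightarrow> st X = en X" for Y :: "(nat, nat, 's) stree"
    using prune_is_st_eq_en[of "tplus Y" X] by (simp add: tplus_def)
  have star: "prune_is (tstar Y) X \<Longrightarrow> st X = en X" for Y :: "(nat, nat, 's) stree"
    using prune_is_st_eq_en[of "tstar Y" X] by (simp add: tstar_def)
  have "st X = en X \<Longrightarrow> tplus X = X" "st X = en X \<Longrightarrow> tstar X = X"
    unfolding tplus_def tstar_def by simp_all
  then show ?thesis
    using prune_is_tmult_self[OF assms] st_eq_en_if_prune_is_tmult_self[OF \<open>is_tree X\<close>]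
      prune_is_self[OF \<open>pruned X\<close>] plus star assms by metis
qed

end
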